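(* Let $n>1$ be an integer, let $D'\in\mathcal{T}_{n-1}$ and let $b\in V(D')$. Let $D$ be the digraph with $V(D)=V(D')\cup\{a\}$, where $a$ is a new vertex, and whose arc set is defined by one of the following rules: (i) if $b$ is domination-forced in $D'$, then $A(D)=A(D')\cup\{ba,aa\}$; (ii) if $bb$ is not an arc, $d^+_{D'}(f^-_{D'}(b))=1$ and $f^-_{D'}(b)$ is domination-forced in $D'$, then $A(D)=A(D')\cup\{ab,aa\}$. Then $D\in\mathcal{T}_n$.
   Context: Digraphs are finite and may contain loops; between two distinct vertices there may be arcs in one or both directions, no repeated arcs; $A(D)$ is the arc set. $N^-(v)=\{u: uv\text{ is an arc}\}$, $N^+(v)=\{u:vu\text{ is an arc}\}$ (loops included), $d^+(v)=|N^+(v)|$. An OLD set of $D$ is a set $S\subseteq V(D)$ such that every vertex has an in-neighbour in $S$ and for every two distinct vertices $u,w$ some vertex of $S$ lies in exactly one of $N^-(u),N^-(w)$. $D$ is locatable if it has an OLD set, and then $\gamma_{OL}(D)$ is the minimum size of an OLD set. A vertex $v$ is domination-forced if some vertex $w$ has $N^-(w)=\{v\}$. An arc $xy$ (possibly a loop) is forcing if $N^-(y)=\{x\}$ or there is a vertex $z$ with $N^-(z)=N^-(y)\setminus\{x\}$. In a locatable digraph $D'$ of order $m$ with $\gamma_{OL}(D')=m$, every vertex $v$ is the head of exactly one forcing arc; its tail is denoted $f^-_{D'}(v)$. The underlying graph of $D$ is the simple undirected graph on $V(D)$ with an edge $xy$ ($x\ne y$) whenever $xy$ or $yx$ is an arc.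 $\mathcal{T}_n$ is the set of all connected locatable digraphs $D$ of order $n$ with $\gamma_{OL}(D)=n$ whose underlying graph is a tree. *)

theory Defs
  imports Main
begin

text \<open>A digraph is given by a vertex set V and an arc set A (pairs (x,y) = arc xy);
loops allowed, no repeated arcs (A is a set).\<close>

definition digraph :: "'a set \<Rightarrow> ('a \<times> 'a) set \<Rightarrow> bool" where
  "digraph V A \<longleftrightarrow> finite V \<and> A \<subseteq> V \<times> V"

definition in_nbrs :: "('a \<times> 'a) set \<Rightarrow> 'a \<Rightarrow> 'a set" where
  "in_nbrs A v = {u. (u, v) \<in> A}"

definition out_nbrs :: "('a \<times> 'a) set \<Rightarrow> 'a \<Rightarrow> 'a set" where
  "out_nbrs A v = {u. (v, u) \<in> A}"

definition out_degree :: "('a \<times> 'a) set \<Rightarrow> 'a \<Rightarrow> nat" where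
  "out_degree A v = card (out_nbrs A v)"

definition is_OLD :: "'a set \<Rightarrow> ('a \<times> 'a) set \<Rightarrow> 'a set \<Rightarrow> bool" where
  "is_OLD V A S \<longleftrightarrow> S \<subseteq> V
     \<and> (\<forall>v\<in>V. \<exists>s\<in>S. s \<in> in_nbrs A v)
     \<and> (\<forall>u\<in>V. \<forall>w\<in>V. u \<noteq> w \<longrightarrow> (\<exists>s\<in>S. (s \<in> in_nbrs A u) \<noteq> (s \<in> in_nbrs A w)))"

definition locatable :: "'a set \<Rightarrow> ('a \<times> 'a) set \<Rightarrow> bool" where
  "locatable V A \<longleftrightarrow> (\<exists>S. is_OLD V A S)"

definition gamma_OL :: "'a set \<Rightarrow> ('a \<times> 'a) set \<Rightarrow> nat" where
  "gamma_OL V A = (LEAST k. \<exists>S. is_OLD V A S \<and> card S = k)"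

definition domination_forced :: "'a set \<Rightarrow> ('a \<times> 'a) set \<Rightarrow> 'a \<Rightarrow> bool" where
  "domination_forced V A v \<longleftrightarrow> (\<exists>w\<in>V. in_nbrs A w = {v})"

definition forcing_arc :: "'a set \<Rightarrow> ('a \<times> 'a) set \<Rightarrow> 'a \<Rightarrow> 'a \<Rightarrow> bool" where
  "forcing_arc V A x y \<longleftrightarrow> (x, y) \<in> A \<and>
     (in_nbrs A y = {x} \<or> (\<exists>z\<in>V. in_nbrs A z = in_nbrs A y - {x}))"

text \<open>Tail of the (unique, in the relevant setting) forcing arc with head v.\<close>
definition f_minus :: "'a set \<Rightarrow> ('a \<times> 'a) set \<Rightarrow> 'a \<Rightarrow> 'a" where
  "f_minus V A v = (THE x. forcing_arc V A x v)"

definition ug_adj :: "('a \<times> 'a) set \<Rightarrow> 'a \<Rightarrow> 'a \<Rightarrow> bool" where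
  "ug_adj A x y \<longleftrightarrow> x \<noteq> y \<and> ((x, y) \<in> A \<or> (y, x) \<in> A)"

definition ug_connected :: "'a set \<Rightarrow> ('a \<times> 'a) set \<Rightarrow> bool" where
  "ug_connected V A \<longleftrightarrow>
     (\<forall>x\<in>V. \<forall>y\<in>V. (x, y) \<in> {(u, v). u \<in> V \<and> v \<in> V \<and> ug_adj A u v}\<^sup>*)"

definition ug_cycle :: "'a set \<Rightarrow> ('a \<times> 'a) set \<Rightarrow> 'a list \<Rightarrow> bool" where
  "ug_cycle V A cs \<longleftrightarrow> length cs \<ge> 3 \<and> distinct cs \<and> set cs \<subseteq> V
     \<and> (\<forall>i. Suc i < length cs \<longrightarrow> ug_adj A (cs ! i) (cs ! Suc i))
     \<and> ug_adj A (last cs) (hd cs)"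

definition ug_tree :: "'a set \<Rightarrow> ('a \<times> 'a) set \<Rightarrow> bool" where
  "ug_tree V A \<longleftrightarrow> V \<noteq> {} \<and> ug_connected V A \<and> (\<nexists>cs. ug_cycle V A cs)"

definition in_T :: "nat \<Rightarrow> 'a set \<Rightarrow> ('a \<times> 'a) set \<Rightarrow> bool" where
  "in_T n V A \<longleftrightarrow> digraph V A \<and> card V = n \<and> ug_connected V A \<and> locatable V A
     \<and> gamma_OL V A = n \<and> ug_tree V A"

end

theory Submission
  imports Defs
begin

(*
  Call D extremal if V is an OLD set of D but no proper subset is; for locatable D this
  means gamma_OL(D) = |V|. Removing one vertex x from V destroys the OLD property exactly
  when x is the tail of a forcing arc, so D is extremal iff V is an OLD set and every
  vertex is the tail of a forcing arc. Both rules keep the in-neighbourhoods of D', except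
  that under rule (ii) the one of b gains a. Then b is the only out-neighbour of
  c = f^-(b) and N(b) = {c}, so every forcing arc of D' other than cb keeps its witness,
  while cb gets the new witness a, as N(b) - {c} = {a} = N(a). The new vertex a is the
  tail of its loop, and it is a pendant vertex at b of the underlying graph, which
  therefore stays a tree.

  That each vertex is the head of exactly one forcing arc, which makes f^- meaningful,
  comes from Bondy's theorem: the in-neighbourhoods of an extremal digraph of order m
  together with the empty set are m + 1 sets in which each of the m vertices is
  critical, so the pairs (P, P - {x}) form a tree rooted at the empty set in which every
  nonempty set has exactly one parent.
*)

section \<open>Bondy's theorem and critical families\<close>

definition critical :: "'a set set \<Rightarrow> 'a \<Rightarrow> bool" where
  "critical F x \<longleftrightarrow> (\<exists>P\<in>F. x \<in> P \<and> P - {x} \<in> F)"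

lemma critical_image_remove:
  assumes "critical F y" "y \<noteq> x"
  shows "critical ((\<lambda>S. S - {x}) ` F) y"
proof -
  obtain P where P: "P \<in> F" "y \<in> P" "P - {y} \<in> F"
    using assms(1) unfolding critical_def by blast
  have "P - {x} - {y} = (\<lambda>S. S - {x}) (P - {y})" by blast
  then show ?thesis
    unfolding critical_def using P assms(2) by (intro bexI[of _ "P - {x}"]) auto
qed

lemma image_remove_Diff:
  assumes "K \<subseteq> F" "\<forall>Q\<in>K. Q - {x} \<in> F - K"
  shows "(\<lambda>S. S - {x}) ` F = (\<lambda>S. S - {x}) ` (F - K)"
proof
  show "(\<lambda>S. S - {x}) ` F \<subseteq> (\<lambda>S. S - {x}) ` (F - K)"
  proof (rule image_subsetI)
    fix Q assume "Q \<in> F"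
    show "Q - {x} \<in> (\<lambda>S. S - {x}) ` (F - K)"
    proof (cases "Q \<in> K")
      case True
      then show ?thesis using assms(2) by (intro image_eqI[of _ _ "Q - {x}"]) auto
    qed (use \<open>Q \<in> F\<close> in blast)
  qed
qed blast

lemma bondy:
  assumes "finite L" "finite F" "F \<noteq> {}" "\<forall>x\<in>L. critical F x"
  shows "card L < card F"
  using assms
proof (induction L arbitrary: F rule: finite_induct)
  case empty
  then show ?case by (simp add: card_gt_0_iff)
next
  case (insert x L)
  obtain P where P: "P \<in> F" "x \<in> P" "P - {x} \<in> F"
    using insert.prems(3) unfolding critical_def by blast
  define F' where "F' = (\<lambda>S. S - {x}) ` F"
  have "\<forall>y\<in>L. critical F' y"
    unfolding F'_def using insert.prems(3) insert.hyps(2) by (auto intro: critical_image_remove)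
  moreover have "finite F'" "F' \<noteq> {}" unfolding F'_def using insert.prems(1,2) by auto
  ultimately have "card L < card F'" using insert.IH by blast
  also have "F' = (\<lambda>S. S - {x}) ` (F - {P})"
    unfolding F'_def using P by (intro image_remove_Diff) auto
  also have "card \<dots> \<le> card (F - {P})" using insert.prems(1) by (intro card_image_le) simp
  finally have "card L < card (F - {P})" .
  then show ?case using P(1) insert.prems(1) insert.hyps by (simp add: card_Diff_singleton)
qed

locale critical_family =
  fixes X :: "'a set" and F :: "'a set set"
  assumes finite_X: "finite X" and finite_F: "finite F"
    and card_F: "card F = Suc (card X)"
    and all_critical: "x \<in> X \<Longrightarrow> critical F x"
begin

text \<open>If P \<noteq> Q, contracting x merges both pairs (P, P - {x}) and (Q, Q - {x}) while the
  other elements stay critical, which beats Bondy's bound.\<close>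
lemma critical_pair_unique:
  assumes "P \<in> F" "Q \<in> F" "x \<in> P" "x \<in> Q" "P - {x} \<in> F" "Q - {x} \<in> F"
  shows "P = Q"
proof (rule ccontr)
  assume "P \<noteq> Q"
  define F' where "F' = (\<lambda>S. S - {x}) ` F"
  have "\<forall>y\<in>X - {x}. critical F' y"
    unfolding F'_def using all_critical by (auto intro: critical_image_remove)
  moreover have "finite F'" "F' \<noteq> {}" unfolding F'_def using finite_F assms(1) by auto
  ultimately have "card (X - {x}) < card F'" using finite_X by (intro bondy) auto
  also have "F' = (\<lambda>S. S - {x}) ` (F - {P, Q})"
    unfolding F'_def using assms \<open>P \<noteq> Q\<close> by (intro image_remove_Diff) auto
  also have "card \<dots> \<le> card (F - {P, Q})" using finite_F by (intro card_image_le) simp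
  also have "\<dots> = card F - 2"
    using finite_F assms(1,2) \<open>P \<noteq> Q\<close> by (subst card_Diff_subset) auto
  finally show False
    using card_F finite_X by (cases "x \<in> X") (simp_all add: card_Diff_singleton)
qed

end

inductive buildable :: "'a set set \<Rightarrow> 'a set \<Rightarrow> bool" for F where
  buildable_empty: "buildable F {}"
| buildable_insert:
    "buildable F Q \<Longrightarrow> x \<notin> Q \<Longrightarrow> insert x Q \<in> F \<Longrightarrow> buildable F (insert x Q)"

lemma buildable_mem: "buildable F Q \<Longrightarrow> {} \<in> F \<Longrightarrow> Q \<in> F"
  by (induction rule: buildable.induct) auto

lemma buildable_step_into:
  assumes "buildable F Q" "x \<in> Q"
  shows "\<exists>S. buildable F S \<and> x \<notin> S \<and> insert x S \<in> F \<and> insert x S \<subseteq> Q"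
  using assms by (induction rule: buildable.induct) blast+

locale rooted_critical_family = critical_family +
  assumes empty_mem: "{} \<in> F" and mem_subset: "P \<in> F \<Longrightarrow> P \<subseteq> X"
begin

lemma buildable_remove:
  assumes "buildable F Q" "x \<in> Q" "Q - {x} \<in> F"
  shows "buildable F (Q - {x})"
proof -
  obtain S where S: "buildable F S" "x \<notin> S" "insert x S \<in> F" "insert x S \<subseteq> Q"
    using buildable_step_into[OF assms(1,2)] by blast
  have "S \<in> F" using S(1) empty_mem by (rule buildable_mem)
  then have "insert x S = Q"
    using S(2,3) assms buildable_mem[OF assms(1) empty_mem]
    by (intro critical_pair_unique) auto
  then show ?thesis using S(1,2) by auto
qed

lemma buildable_edge_iff:
  assumes "Q \<in> F" "x \<in> Q" "Q - {x} \<in> F"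
  shows "buildable F Q \<longleftrightarrow> buildable F (Q - {x})"
proof
  assume "buildable F (Q - {x})"
  then show "buildable F Q"
    using buildable_insert[of F "Q - {x}" x] assms by (simp add: insert_absorb)
qed (use assms buildable_remove in blast)

lemma critical_buildable_or_not:
  assumes "x \<in> X"
  shows "critical {Q \<in> F. buildable F Q} x \<or> critical {Q \<in> F. \<not> buildable F Q} x"
proof -
  obtain Q where Q: "Q \<in> F" "x \<in> Q" "Q - {x} \<in> F"
    using all_critical[OF assms] unfolding critical_def by blast
  have "buildable F (Q - {x}) \<longleftrightarrow> buildable F Q" using buildable_edge_iff[OF Q] by simp
  then show ?thesis
    using Q unfolding critical_def by (cases "buildable F Q") (metis (mono_tags) mem_Collect_eq)+
qed

text \<open>The pairs labelled by the elements do not cross between the buildable sets and the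
  others, so if both classes were nonempty, Bondy's bound on each would leave too few
  labels.\<close>
lemma buildable_all:
  assumes "P \<in> F"
  shows "buildable F P"
proof -
  define D where "D = {Q \<in> F. buildable F Q}"
  define E where "E = {Q \<in> F. \<not> buildable F Q}"
  have split: "critical D x \<or> critical E x" if "x \<in> X" for x
    unfolding D_def E_def using that by (rule critical_buildable_or_not)
  have D: "finite D" "D \<subseteq> F" "{} \<in> D"
    unfolding D_def using finite_F empty_mem buildable_empty by auto
  have E: "E = F - D" unfolding E_def D_def by blast
  have "E = {}"
  proof (rule ccontr)
    assume "E \<noteq> {}"
    define L1 where "L1 = {x \<in> X. critical D x}"
    define L2 where "L2 = {x \<in> X. critical E x}"
    have "card L1 < card D"
      using D finite_X by (intro bondy) (auto simp: L1_def)
    moreover have "card L2 < card E"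
      using \<open>E \<noteq> {}\<close> finite_X finite_F by (intro bondy) (auto simp: L2_def E)
    moreover have "card X \<le> card L1 + card L2"
    proof -
      have "X \<subseteq> L1 \<union> L2" using split by (auto simp: L1_def L2_def)
      then have "card X \<le> card (L1 \<union> L2)"
        using finite_X by (intro card_mono) (auto simp: L1_def L2_def)
      then show ?thesis using card_Un_le le_trans by blast
    qed
    moreover have "card E = card F - card D" unfolding E using D by (simp add: card_Diff_subset)
    moreover have "card D \<le> card F" using D finite_F by (intro card_mono) auto
    ultimately show False using card_F by linarith
  qed
  then show ?thesis using assms unfolding E_def by blast
qed

lemma ex_remove_mem:
  assumes "P \<in> F" "P \<noteq> {}"
  shows "\<exists>x\<in>P. P - {x} \<in> F"
  using buildable_all[OF assms(1)]
proof cases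
  case (buildable_insert Q x)
  then show ?thesis using buildable_mem empty_mem by auto
qed (use assms(2) in simp)

text \<open>Each element x labels exactly one pair (P, P - {x}) and every nonempty member is the top
  of some pair; as there are as many labels as nonempty members, each is the top of exactly
  one pair.\<close>
lemma remove_mem_unique:
  assumes "P \<in> F" "x \<in> P" "P - {x} \<in> F" "y \<in> P" "P - {y} \<in> F"
  shows "x = y"
proof -
  define upper where "upper z = (SOME Q. Q \<in> F \<and> z \<in> Q \<and> Q - {z} \<in> F)" for z
  have upper: "upper z \<in> F \<and> z \<in> upper z \<and> upper z - {z} \<in> F" if "z \<in> X" for z
  proof -
    have "\<exists>Q. Q \<in> F \<and> z \<in> Q \<and> Q - {z} \<in> F"
      using all_critical[OF that] unfolding critical_def by blast
    then show ?thesis unfolding upper_def by (rule someI_ex)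
  qed
  have upper_eq: "upper z = Q" if "Q \<in> F" "z \<in> Q" "Q - {z} \<in> F" for Q z
    using upper[of z] that mem_subset critical_pair_unique by blast
  have "upper ` X = F - {{}}"
  proof
    show "upper ` X \<subseteq> F - {{}}" using upper by blast
    show "F - {{}} \<subseteq> upper ` X"
    proof
      fix Q assume Q: "Q \<in> F - {{}}"
      then obtain z where "z \<in> Q" "Q - {z} \<in> F" using ex_remove_mem by blast
      then show "Q \<in> upper ` X" using Q upper_eq mem_subset by blast
    qed
  qed
  then have "card (upper ` X) = card X"
    using finite_F card_F empty_mem by (simp add: card_Diff_singleton)
  then have "inj_on upper X" using finite_X by (simp add: inj_on_iff_eq_card)
  moreover have "x \<in> X" "y \<in> X" using assms mem_subset by auto
  ultimately show ?thesis using upper_eq assms by (metis inj_on_def)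
qed

lemma ex1_remove_mem:
  assumes "P \<in> F" "P \<noteq> {}"
  shows "\<exists>!x. x \<in> P \<and> P - {x} \<in> F"
  using ex_remove_mem[OF assms] remove_mem_unique[OF assms(1)] by blast

end

section \<open>Forcing arcs and extremal digraphs\<close>

lemma is_OLD_superset: "is_OLD V A S \<Longrightarrow> S \<subseteq> T \<Longrightarrow> T \<subseteq> V \<Longrightarrow> is_OLD V A T"
  unfolding is_OLD_def by (meson subsetD)

lemma locatable_iff_is_OLD_vertices: "locatable V A \<longleftrightarrow> is_OLD V A V"
proof
  assume "locatable V A"
  then obtain S where S: "is_OLD V A S" unfolding locatable_def by blast
  then show "is_OLD V A V"
    by (rule is_OLD_superset) (use S in \<open>simp_all add: is_OLD_def\<close>)
qed (auto simp: locatable_def)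

definition OLD_extremal :: "'a set \<Rightarrow> ('a \<times> 'a) set \<Rightarrow> bool" where
  "OLD_extremal V A \<longleftrightarrow> is_OLD V A V \<and> (\<forall>S. is_OLD V A S \<longrightarrow> S = V)"

lemma OLD_extremal_iff_gamma_OL:
  assumes "finite V"
  shows "OLD_extremal V A \<longleftrightarrow> locatable V A \<and> gamma_OL V A = card V"
proof
  assume ext: "OLD_extremal V A"
  have "gamma_OL V A = card V"
    unfolding gamma_OL_def
  proof (rule Least_equality)
    show "\<exists>S. is_OLD V A S \<and> card S = card V" using ext unfolding OLD_extremal_def by blast
  qed (use ext in \<open>auto simp: OLD_extremal_def\<close>)
  then show "locatable V A \<and> gamma_OL V A = card V"
    using ext by (simp add: OLD_extremal_def locatable_iff_is_OLD_vertices)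
next
  assume loc: "locatable V A \<and> gamma_OL V A = card V"
  have "S = V" if S: "is_OLD V A S" for S
  proof -
    have "gamma_OL V A \<le> card S" unfolding gamma_OL_def using S by (intro Least_le) blast
    moreover have "S \<subseteq> V" using S unfolding is_OLD_def by simp
    ultimately show "S = V" using loc assms card_seteq by metis
  qed
  then show "OLD_extremal V A"
    using loc by (simp add: OLD_extremal_def locatable_iff_is_OLD_vertices)
qed

lemma forcing_arc_iff:
  "forcing_arc V A x y \<longleftrightarrow>
    x \<in> in_nbrs A y \<and> (in_nbrs A y = {x} \<or> (\<exists>z\<in>V. in_nbrs A z = in_nbrs A y - {x}))"
  unfolding forcing_arc_def in_nbrs_def by simp

lemma forcing_arc_if_not_is_OLD_remove:
  assumes "A \<subseteq> V \<times> V" "is_OLD V A V" "\<not> is_OLD V A (V - {x})"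
  shows "\<exists>y\<in>V. forcing_arc V A x y"
proof -
  have N_sub: "in_nbrs A v \<subseteq> V" for v using assms(1) unfolding in_nbrs_def by auto
  have N_ne: "in_nbrs A v \<noteq> {}" if "v \<in> V" for v
    using assms(2) that unfolding is_OLD_def by blast
  have N_inj: "in_nbrs A u \<noteq> in_nbrs A w" if "u \<in> V" "w \<in> V" "u \<noteq> w" for u w
    using assms(2) that unfolding is_OLD_def by metis
  from assms(3) consider (dom) v where "v \<in> V" "\<forall>s\<in>V - {x}. s \<notin> in_nbrs A v"
    | (sep) u w where "u \<in> V" "w \<in> V" "u \<noteq> w"
        "\<forall>s\<in>V - {x}. (s \<in> in_nbrs A u) = (s \<in> in_nbrs A w)"
    unfolding is_OLD_def by auto
  then show ?thesis
  proof cases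
    case dom
    then have "in_nbrs A v = {x}" using N_sub[of v] N_ne[of v] by blast
    then show ?thesis using dom(1) by (auto simp: forcing_arc_iff)
  next
    case sep
    then consider "x \<in> in_nbrs A u" "in_nbrs A w = in_nbrs A u - {x}"
      | "x \<in> in_nbrs A w" "in_nbrs A u = in_nbrs A w - {x}"
      using N_inj[OF sep(1-3)] N_sub[of u] N_sub[of w] by blast
    then show ?thesis
    proof cases
      case 1
      then have "forcing_arc V A x u" using sep(2) by (auto simp: forcing_arc_iff)
      then show ?thesis using sep(1) ..
    next
      case 2
      then have "forcing_arc V A x w" using sep(1) by (auto simp: forcing_arc_iff)
      then show ?thesis using sep(2) ..
    qed
  qed
qed

lemma not_is_OLD_remove_if_forcing_arc:
  assumes "forcing_arc V A x y" "y \<in> V"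
  shows "\<not> is_OLD V A (V - {x})"
proof -
  have x: "x \<in> in_nbrs A y" using assms(1) unfolding forcing_arc_iff by blast
  from assms(1) consider "in_nbrs A y = {x}"
    | z where "z \<in> V" "in_nbrs A z = in_nbrs A y - {x}"
    unfolding forcing_arc_iff by blast
  then show ?thesis
  proof cases
    case 1
    then show ?thesis using assms(2) unfolding is_OLD_def by auto
  next
    case 2
    then have "z \<noteq> y" using x by auto
    moreover have "\<forall>s\<in>V - {x}. (s \<in> in_nbrs A y) = (s \<in> in_nbrs A z)"
      using 2(2) by auto
    ultimately show ?thesis using 2(1) assms(2) unfolding is_OLD_def by blast
  qed
qed

lemma OLD_extremal_iff_forcing_tails:
  assumes "A \<subseteq> V \<times> V" "is_OLD V A V"
  shows "OLD_extremal V A \<longleftrightarrow> (\<forall>x\<in>V. \<exists>y\<in>V. forcing_arc V A x y)"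
proof -
  have "(\<forall>S. is_OLD V A S \<longrightarrow> S = V) \<longleftrightarrow> (\<forall>x\<in>V. \<not> is_OLD V A (V - {x}))"
  proof
    assume "\<forall>S. is_OLD V A S \<longrightarrow> S = V"
    then show "\<forall>x\<in>V. \<not> is_OLD V A (V - {x})" by blast
  next
    assume none: "\<forall>x\<in>V. \<not> is_OLD V A (V - {x})"
    show "\<forall>S. is_OLD V A S \<longrightarrow> S = V"
    proof (intro allI impI)
      fix S assume S: "is_OLD V A S"
      then have "S \<subseteq> V" unfolding is_OLD_def by simp
      moreover have "x \<in> S" if x: "x \<in> V" for x
      proof (rule ccontr)
        assume "x \<notin> S"
        then have "is_OLD V A (V - {x})"
          using \<open>S \<subseteq> V\<close> by (intro is_OLD_superset[OF S]) auto
        then show False using none x by blast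
      qed
      ultimately show "S = V" by blast
    qed
  qed
  moreover have "\<not> is_OLD V A (V - {x}) \<longleftrightarrow> (\<exists>y\<in>V. forcing_arc V A x y)" for x
  proof
    assume "\<not> is_OLD V A (V - {x})"
    then show "\<exists>y\<in>V. forcing_arc V A x y" by (rule forcing_arc_if_not_is_OLD_remove[OF assms])
  qed (auto dest: not_is_OLD_remove_if_forcing_arc)
  ultimately show ?thesis
    using assms(2) unfolding OLD_extremal_def by simp
qed

definition in_nbr_family :: "'a set \<Rightarrow> ('a \<times> 'a) set \<Rightarrow> 'a set set" where
  "in_nbr_family V A = insert {} (in_nbrs A ` V)"

lemma forcing_arc_iff_in_nbr_family:
  "forcing_arc V A x y \<longleftrightarrow> x \<in> in_nbrs A y \<and> in_nbrs A y - {x} \<in> in_nbr_family V A"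
proof -
  have "in_nbrs A y = {x} \<longleftrightarrow> in_nbrs A y - {x} = {}" if "x \<in> in_nbrs A y"
    using that by blast
  then show ?thesis unfolding forcing_arc_iff in_nbr_family_def by blast
qed

lemma rooted_critical_family_in_nbrs:
  assumes "digraph V A" "OLD_extremal V A"
  shows "rooted_critical_family V (in_nbr_family V A)"
proof -
  have fin: "finite V" and AV: "A \<subseteq> V \<times> V" using assms(1) unfolding digraph_def by auto
  have OLD: "is_OLD V A V" using assms(2) unfolding OLD_extremal_def by simp
  have "inj_on (in_nbrs A) V"
  proof (rule inj_onI)
    fix u w assume "u \<in> V" "w \<in> V" "in_nbrs A u = in_nbrs A w"
    then show "u = w" using OLD unfolding is_OLD_def by metis
  qed
  moreover have "{} \<notin> in_nbrs A ` V"
  proof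
    assume "{} \<in> in_nbrs A ` V"
    then obtain v where "v \<in> V" "in_nbrs A v = {}" by (metis imageE)
    then show False using OLD unfolding is_OLD_def by blast
  qed
  ultimately have card: "card (in_nbr_family V A) = Suc (card V)"
    unfolding in_nbr_family_def using fin by (simp add: card_image)
  have tails: "\<forall>x\<in>V. \<exists>y\<in>V. forcing_arc V A x y"
    using assms(2) OLD_extremal_iff_forcing_tails[OF AV OLD] by simp
  have crit: "critical (in_nbr_family V A) x" if x: "x \<in> V" for x
  proof -
    obtain y where "y \<in> V" "forcing_arc V A x y" using tails x by blast
    then show ?thesis
      unfolding forcing_arc_iff_in_nbr_family critical_def in_nbr_family_def by blast
  qed
  have sub: "P \<subseteq> V" if "P \<in> in_nbr_family V A" for P
    using that AV unfolding in_nbr_family_def in_nbrs_def by auto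
  show ?thesis
    by unfold_locales (use fin card crit sub in \<open>auto simp: in_nbr_family_def\<close>)
qed

lemma forcing_arc_f_minus:
  assumes "digraph V A" "OLD_extremal V A" "y \<in> V"
  shows "forcing_arc V A (f_minus V A y) y"
proof -
  interpret rooted_critical_family V "in_nbr_family V A"
    using assms(1,2) by (rule rooted_critical_family_in_nbrs)
  have "in_nbrs A y \<in> in_nbr_family V A" using assms(3) unfolding in_nbr_family_def by simp
  moreover have "in_nbrs A y \<noteq> {}"
    using assms(2,3) unfolding OLD_extremal_def is_OLD_def by blast
  ultimately have "\<exists>!x. forcing_arc V A x y"
    unfolding forcing_arc_iff_in_nbr_family by (rule ex1_remove_mem)
  then show ?thesis unfolding f_minus_def by (rule theI')
qed

section \<open>Adding a vertex\<close>

lemma is_OLD_insert_vertex: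
  assumes "is_OLD V' A' V'" and "a \<notin> V'"
    and "A \<subseteq> insert a V' \<times> insert a V'"
    and "\<And>v. v \<in> V' \<Longrightarrow> in_nbrs A v - {a} = in_nbrs A' v"
    and "in_nbrs A a \<noteq> {}"
    and "\<And>v. v \<in> V' \<Longrightarrow> in_nbrs A v \<noteq> in_nbrs A a"
  shows "is_OLD (insert a V') A (insert a V')"
proof -
  have N_sub: "in_nbrs A v \<subseteq> insert a V'" for v
    using assms(3) unfolding in_nbrs_def by auto
  have dom: "\<exists>s\<in>insert a V'. s \<in> in_nbrs A v" if "v \<in> insert a V'" for v
  proof (cases "v = a")
    case False
    then have "in_nbrs A' v \<noteq> {}" using assms(1) that unfolding is_OLD_def by auto
    then show ?thesis using assms(4) that False N_sub by blast
  qed (use assms(5) N_sub in blast)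
  have sep: "\<exists>s\<in>insert a V'. (s \<in> in_nbrs A u) \<noteq> (s \<in> in_nbrs A w)"
    if uw: "u \<in> insert a V'" "w \<in> insert a V'" "u \<noteq> w" for u w
  proof (cases "u = a \<or> w = a")
    case True
    then have "in_nbrs A u \<noteq> in_nbrs A w" using assms(6) uw by auto
    then show ?thesis using N_sub by blast
  next
    case False
    then have "u \<in> V'" "w \<in> V'" using uw by auto
    then obtain s where s: "s \<in> V'" "(s \<in> in_nbrs A' u) \<noteq> (s \<in> in_nbrs A' w)"
      using assms(1) uw(3) unfolding is_OLD_def by blast
    have "s \<noteq> a" using s(1) assms(2) by blast
    then have "(s \<in> in_nbrs A v) = (s \<in> in_nbrs A' v)" if "v \<in> V'" for v
      using assms(4)[OF that] by blast
    then show ?thesis using s \<open>u \<in> V'\<close> \<open>w \<in> V'\<close> by blast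
  qed
  show ?thesis unfolding is_OLD_def using dom sep by blast
qed

lemma forcing_arc_transfer:
  assumes "forcing_arc V' A' x y" "V' \<subseteq> V" "in_nbrs A y = in_nbrs A' y"
    and "\<And>z. z \<in> V' \<Longrightarrow> in_nbrs A' z = in_nbrs A' y - {x} \<Longrightarrow> in_nbrs A z = in_nbrs A' z"
  shows "forcing_arc V A x y"
proof -
  have x: "x \<in> in_nbrs A y" using assms(1,3) unfolding forcing_arc_iff by simp
  from assms(1) consider "in_nbrs A' y = {x}"
    | z where "z \<in> V'" "in_nbrs A' z = in_nbrs A' y - {x}"
    unfolding forcing_arc_iff by blast
  then show ?thesis
  proof cases
    case 1
    then show ?thesis using x assms(3) unfolding forcing_arc_iff by simp
  next
    case 2
    then have "z \<in> V" "in_nbrs A z = in_nbrs A y - {x}" using assms(2-4) by auto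
    then show ?thesis using x unfolding forcing_arc_iff by blast
  qed
qed

lemma OLD_extremal_add_leaf_from:
  assumes ext: "OLD_extremal V' A'" and AV: "A' \<subseteq> V' \<times> V'" and a: "a \<notin> V'"
    and w: "w \<in> V'" "in_nbrs A' w = {b}"
  shows "OLD_extremal (insert a V') (A' \<union> {(b, a), (a, a)})" (is "OLD_extremal ?V ?A")
proof -
  have b: "b \<in> V'" using w AV unfolding in_nbrs_def by auto
  have N_sub: "in_nbrs A' v \<subseteq> V'" for v using AV unfolding in_nbrs_def by auto
  have N_old: "in_nbrs ?A v = in_nbrs A' v" if "v \<in> V'" for v
    using that a unfolding in_nbrs_def by auto
  have N_a: "in_nbrs ?A a = {b, a}" using a AV unfolding in_nbrs_def by auto
  have A_sub: "?A \<subseteq> ?V \<times> ?V" using AV b by auto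
  have OLD': "is_OLD V' A' V'" using ext unfolding OLD_extremal_def by simp
  have OLD: "is_OLD ?V ?A ?V"
  proof (rule is_OLD_insert_vertex[OF OLD' a A_sub])
    show "in_nbrs ?A v - {a} = in_nbrs A' v" if "v \<in> V'" for v
      using N_old[OF that] N_sub a by auto
    show "in_nbrs ?A v \<noteq> in_nbrs ?A a" if "v \<in> V'" for v
      using N_old[OF that] N_a N_sub[of v] a by auto
  qed (use N_a in simp)
  have "\<exists>y\<in>?V. forcing_arc ?V ?A x y" if x: "x \<in> ?V" for x
  proof (cases "x = a")
    case True
    have "in_nbrs ?A w = in_nbrs ?A a - {a}" using N_old[OF w(1)] w(2) N_a a b by auto
    then have "forcing_arc ?V ?A a a" using N_a w(1) unfolding forcing_arc_iff by blast
    then show ?thesis using True by blast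
  next
    case False
    then obtain y where y: "y \<in> V'" "forcing_arc V' A' x y"
      using ext x OLD_extremal_iff_forcing_tails[OF AV OLD'] by auto
    have "forcing_arc ?V ?A x y"
      by (rule forcing_arc_transfer[OF y(2) subset_insertI N_old[OF y(1)] N_old])
    then show ?thesis using y(1) by blast
  qed
  then show ?thesis using OLD_extremal_iff_forcing_tails[OF A_sub OLD] by blast
qed

lemma forcing_arc_add_leaf_to:
  assumes AV: "A' \<subseteq> V' \<times> V'" and a: "a \<notin> V'"
    and b: "in_nbrs A' b = {c}" and c: "out_nbrs A' c = {b}"
    and xy: "forcing_arc V' A' x y" and "x \<noteq> c"
  shows "forcing_arc (insert a V') (A' \<union> {(a, b), (a, a)}) x y" (is "forcing_arc ?V ?A x y")
proof -
  have N_old: "in_nbrs ?A v = in_nbrs A' v" if "v \<in> V'" "v \<noteq> b" for v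
    using that a unfolding in_nbrs_def by auto
  have "x \<in> in_nbrs A' y" using xy unfolding forcing_arc_iff by blast
  then have y: "y \<in> V'" "y \<noteq> b" using AV b \<open>x \<noteq> c\<close> unfolding in_nbrs_def by auto
  have "z \<noteq> b" if "in_nbrs A' z = in_nbrs A' y - {x}" for z
  proof
    assume "z = b"
    then have "c \<in> in_nbrs A' y" using that b by blast
    then show False using c y(2) unfolding in_nbrs_def out_nbrs_def by auto
  qed
  then show ?thesis
    using N_old by (intro forcing_arc_transfer[OF xy subset_insertI N_old[OF y]]) blast
qed

lemma OLD_extremal_add_leaf_to:
  assumes ext: "OLD_extremal V' A'" and AV: "A' \<subseteq> V' \<times> V'" and a: "a \<notin> V'"
    and b: "in_nbrs A' b = {c}" and c: "out_nbrs A' c = {b}"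
  shows "OLD_extremal (insert a V') (A' \<union> {(a, b), (a, a)})" (is "OLD_extremal ?V ?A")
proof -
  have "(c, b) \<in> A'" using b unfolding in_nbrs_def by auto
  then have bV: "b \<in> V'" and cV: "c \<in> V'" using AV by auto
  have N_sub: "in_nbrs A' v \<subseteq> V'" for v using AV unfolding in_nbrs_def by auto
  have N_old: "in_nbrs ?A v = in_nbrs A' v" if "v \<in> V'" "v \<noteq> b" for v
    using that a unfolding in_nbrs_def by auto
  have N_b: "in_nbrs ?A b = {c, a}" using b unfolding in_nbrs_def by auto
  have N_a: "in_nbrs ?A a = {a}" using a AV bV unfolding in_nbrs_def by auto
  have A_sub: "?A \<subseteq> ?V \<times> ?V" using AV bV by auto
  have OLD': "is_OLD V' A' V'" using ext unfolding OLD_extremal_def by simp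
  have OLD: "is_OLD ?V ?A ?V"
  proof (rule is_OLD_insert_vertex[OF OLD' a A_sub])
    show "in_nbrs ?A v - {a} = in_nbrs A' v" if "v \<in> V'" for v
      using N_old[OF that] N_b b N_sub[of v] a cV by (cases "v = b") auto
    show "in_nbrs ?A v \<noteq> in_nbrs ?A a" if "v \<in> V'" for v
      using N_old[OF that] N_b N_a N_sub[of v] a cV by (cases "v = b") auto
  qed (use N_a in simp)
  have "\<exists>y\<in>?V. forcing_arc ?V ?A x y" if x: "x \<in> ?V" for x
  proof -
    consider "x = a" | "x = c" | "x \<in> V'" "x \<noteq> c" using x by blast
    then show ?thesis
    proof cases
      case 1
      have "forcing_arc ?V ?A a a" using N_a unfolding forcing_arc_iff by blast
      then show ?thesis using 1 by blast
    next
      case 2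
      have "in_nbrs ?A a = in_nbrs ?A b - {c}" using N_a N_b a cV by auto
      then have "forcing_arc ?V ?A c b" using N_b unfolding forcing_arc_iff by blast
      then show ?thesis using 2 bV by blast
    next
      case 3
      then obtain y where y: "y \<in> V'" "forcing_arc V' A' x y"
        using ext OLD_extremal_iff_forcing_tails[OF AV OLD'] by auto
      then show ?thesis using forcing_arc_add_leaf_to[OF AV a b c y(2) 3(2)] by blast
    qed
  qed
  then show ?thesis using OLD_extremal_iff_forcing_tails[OF A_sub OLD] by blast
qed

lemma sole_out_arc_if_domination_forced:
  assumes "(c, b) \<in> A" "out_degree A c = 1" "domination_forced V A c"
  shows "out_nbrs A c = {b}" "in_nbrs A b = {c}"
proof -
  have "b \<in> out_nbrs A c" using assms(1) by (simp add: out_nbrs_def)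
  then show out: "out_nbrs A c = {b}"
    using assms(2) unfolding out_degree_def by (metis card_1_singletonE singletonD)
  obtain w where "in_nbrs A w = {c}" using assms(3) unfolding domination_forced_def by blast
  moreover from this have "w = b" using out unfolding in_nbrs_def out_nbrs_def by auto
  ultimately show "in_nbrs A b = {c}" by simp
qed

section \<open>Pendant vertices of trees\<close>

lemma ug_adj_sym: "ug_adj A x y \<longleftrightarrow> ug_adj A y x"
  unfolding ug_adj_def by blast

lemma ug_connected_insert_pendant:
  assumes "ug_connected V' A'" "b \<in> V'" "ug_adj A a b"
    and "\<And>x y. x \<in> V' \<Longrightarrow> y \<in> V' \<Longrightarrow> ug_adj A' x y \<Longrightarrow> ug_adj A x y"
  shows "ug_connected (insert a V') A"
proof -
  let ?R' = "{(u, v). u \<in> V' \<and> v \<in> V' \<and> ug_adj A' u v}"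
  let ?R = "{(u, v). u \<in> insert a V' \<and> v \<in> insert a V' \<and> ug_adj A u v}"
  have "?R' \<subseteq> ?R" using assms(4) by auto
  then have old: "(x, y) \<in> ?R\<^sup>*" if "x \<in> V'" "y \<in> V'" for x y
    using assms(1) that rtrancl_mono unfolding ug_connected_def by blast
  have "(a, b) \<in> ?R" "(b, a) \<in> ?R" using assms(2,3) ug_adj_sym[of A a b] by auto
  then have "(x, b) \<in> ?R\<^sup>*" "(b, x) \<in> ?R\<^sup>*" if "x \<in> insert a V'" for x
    using that old[OF _ assms(2)] old[OF assms(2)] by auto
  then show ?thesis unfolding ug_connected_def by (meson rtrancl_trans)
qed

lemma ug_cycle_two_nbrs:
  assumes "ug_cycle V A cs" "v \<in> set cs"
  shows "\<exists>x\<in>set cs. \<exists>y\<in>set cs. x \<noteq> y \<and> ug_adj A v x \<and> ug_adj A v y"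
proof -
  define n where "n = length cs"
  define succ where "succ j = (if Suc j < n then Suc j else 0)" for j
  define pred where "pred j = (if j = 0 then n - 1 else j - 1)" for j
  have n: "n \<ge> 3" and dist: "distinct cs"
    using assms(1) unfolding ug_cycle_def n_def by auto
  have step: "ug_adj A (cs ! j) (cs ! succ j)" if "j < n" for j
  proof (cases "Suc j < n")
    case True
    then show ?thesis using assms(1) unfolding ug_cycle_def succ_def n_def by simp
  next
    case False
    then have "j = length cs - 1" "cs \<noteq> []" using that n unfolding n_def by auto
    then have "cs ! j = last cs" "cs ! succ j = hd cs"
      using False unfolding succ_def by (simp_all add: last_conv_nth hd_conv_nth)
    then show ?thesis using assms(1) unfolding ug_cycle_def by simp
  qed
  obtain i where i: "i < n" "cs ! i = v"
    using assms(2) unfolding n_def by (metis in_set_conv_nth)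
  have "pred i < n" "succ i < n" "succ (pred i) = i" "succ i \<noteq> pred i"
    using i(1) n unfolding succ_def pred_def by auto
  moreover have "cs ! succ i \<noteq> cs ! pred i"
    using calculation(1,2,4) dist unfolding n_def by (simp add: nth_eq_iff_index_eq)
  ultimately show ?thesis
    using step[of i] step[of "pred i"] i ug_adj_sym unfolding n_def by (metis nth_mem)
qed

lemma ug_cycle_mono:
  assumes "ug_cycle V A cs" "set cs \<subseteq> V'"
    and "\<And>x y. x \<in> V' \<Longrightarrow> y \<in> V' \<Longrightarrow> ug_adj A x y \<Longrightarrow> ug_adj A' x y"
  shows "ug_cycle V' A' cs"
proof -
  have "cs \<noteq> []" using assms(1) unfolding ug_cycle_def by auto
  then have "last cs \<in> V'" "hd cs \<in> V'" using assms(2) by auto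
  moreover have "cs ! i \<in> V'" "cs ! Suc i \<in> V'" if "Suc i < length cs" for i
    using that assms(2) nth_mem by (metis Suc_lessD subsetD)+
  ultimately show ?thesis using assms unfolding ug_cycle_def by auto
qed

lemma ug_tree_insert_pendant:
  assumes tree: "ug_tree V' A'" and a: "a \<notin> V'" and b: "b \<in> V'"
    and ab: "ug_adj A a b" and a_nbr: "\<And>z. ug_adj A a z \<Longrightarrow> z = b"
    and old: "\<And>x y. x \<noteq> a \<Longrightarrow> y \<noteq> a \<Longrightarrow> ug_adj A x y \<longleftrightarrow> ug_adj A' x y"
  shows "ug_tree (insert a V') A"
proof -
  have "ug_connected V' A'" using tree unfolding ug_tree_def by simp
  then have "ug_connected (insert a V') A"
    by (rule ug_connected_insert_pendant[OF _ b ab]) (metis old a)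
  moreover have "\<not> ug_cycle (insert a V') A cs" for cs
  proof
    assume cycle: "ug_cycle (insert a V') A cs"
    show False
    proof (cases "a \<in> set cs")
      case True
      then obtain x y where "x \<noteq> y" "ug_adj A a x" "ug_adj A a y"
        using ug_cycle_two_nbrs[OF cycle] by blast
      then show False using a_nbr by blast
    next
      case False
      then have "set cs \<subseteq> V'" using cycle unfolding ug_cycle_def by auto
      then have "ug_cycle V' A' cs" by (rule ug_cycle_mono[OF cycle]) (metis old a)
      then show False using tree unfolding ug_tree_def by blast
    qed
  qed
  ultimately show ?thesis unfolding ug_tree_def by blast
qed

lemma in_T_iff_OLD_extremal:
  "in_T n V A \<longleftrightarrow> digraph V A \<and> card V = n \<and> ug_tree V A \<and> OLD_extremal V A"
  using OLD_extremal_iff_gamma_OL[of V A] unfolding in_T_def ug_tree_def digraph_def by blast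

lemma in_T_Suc_insert_pendant:
  assumes T: "in_T m V' A'" and a: "a \<notin> V'" and b: "b \<in> V'"
    and A: "A' \<subseteq> A" "A \<subseteq> A' \<union> {(a, b), (b, a), (a, a)}" "(a, b) \<in> A \<or> (b, a) \<in> A"
    and ext: "OLD_extremal (insert a V') A"
  shows "in_T (Suc m) (insert a V') A"
proof -
  have "finite V'" and AV: "A' \<subseteq> V' \<times> V'" and "card V' = m" and tree: "ug_tree V' A'"
    using T unfolding in_T_iff_OLD_extremal digraph_def by auto
  then have "digraph (insert a V') A" "card (insert a V') = Suc m"
    using A(2) a b unfolding digraph_def by auto
  moreover have "ug_tree (insert a V') A"
  proof (rule ug_tree_insert_pendant[OF tree a b])
    show "ug_adj A a b" using A(3) a b unfolding ug_adj_def by auto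
    show "z = b" if "ug_adj A a z" for z
      using that A(2) AV a unfolding ug_adj_def by auto
    show "ug_adj A x y \<longleftrightarrow> ug_adj A' x y" if "x \<noteq> a" "y \<noteq> a" for x y
      using that A(1,2) unfolding ug_adj_def by auto
  qed
  ultimately show ?thesis using ext unfolding in_T_iff_OLD_extremal by blast
qed

theorem lemma25:
  fixes n :: nat and V' :: "'a set" and A' A :: "('a \<times> 'a) set" and a b :: 'a
  assumes "n > 1"
    and "in_T (n - 1) V' A'"
    and "b \<in> V'"
    and "a \<notin> V'"
    and "(domination_forced V' A' b \<and> A = A' \<union> {(b, a), (a, a)})
         \<or> ((b, b) \<notin> A' \<and> out_degree A' (f_minus V' A' b) = 1
            \<and> domination_forced V' A' (f_minus V' A' b) \<and> A = A' \<union> {(a, b), (a, a)})"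
  shows "in_T n (insert a V') A"
proof -
  have dg: "digraph V' A'" and ext: "OLD_extremal V' A'"
    using assms(2) unfolding in_T_iff_OLD_extremal by auto
  then have AV: "A' \<subseteq> V' \<times> V'" unfolding digraph_def by simp
  \<comment> \<open>Rule (ii) does not need its hypothesis that bb is not an arc.\<close>
  from assms(5) have "OLD_extremal (insert a V') A"
  proof (elim disjE conjE)
    assume "domination_forced V' A' b" "A = A' \<union> {(b, a), (a, a)}"
    then show ?thesis
      using OLD_extremal_add_leaf_from[OF ext AV assms(4)]
      unfolding domination_forced_def by blast
  next
    define c where "c = f_minus V' A' b"
    assume "out_degree A' (f_minus V' A' b) = 1" "domination_forced V' A' (f_minus V' A' b)"
      and A: "A = A' \<union> {(a, b), (a, a)}"
    moreover have "(c, b) \<in> A'"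
      using forcing_arc_f_minus[OF dg ext assms(3)] unfolding c_def forcing_arc_def by simp
    ultimately have "in_nbrs A' b = {c}" "out_nbrs A' c = {b}"
      using sole_out_arc_if_domination_forced unfolding c_def by metis+
    then show ?thesis unfolding A by (rule OLD_extremal_add_leaf_to[OF ext AV assms(4)])
  qed
  moreover have "Suc (n - 1) = n" using assms(1) by simp
  moreover have "A' \<subseteq> A" "A \<subseteq> A' \<union> {(a, b), (b, a), (a, a)}" "(a, b) \<in> A \<or> (b, a) \<in> A"
    using assms(5) by auto
  ultimately show ?thesis using in_T_Suc_insert_pendant[OF assms(2,4,3)] by metis
qed

end
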